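(* For any measurable loss function $\ell:\mathcal{W}\times\mathcal{Z}\to[0,\infty)$, any distributions $\mu,\mu'$ on $\mathcal{Z}$, any $n\ge 1$ and any learning algorithm $\mathsf{A}$ run on a training set $S'\sim(\mu')^{\otimes n}$, \[ \mathrm{gen}(\mu,\mu',\mathsf{A})\le \mathsf{D}_2\!\left(\frac{I(S';\mathsf{A}(S'))}{n}\right), \] where for $r\ge 0$ \[ \mathsf{D}_2(r)\triangleq \sup_{P_{\hat W|Z'}:\ I(\hat W;Z')\le r}\ \mathbb{E}\big[L_\mu(\hat W)-\ell(\hat W,Z')\big], \] the supremum being over all Markov kernels $P_{\hat W|Z'}$ from $\mathcal{Z}$ to $\mathcal{W}$, with $Z'\sim\mu'$ (a single sample).
   Context: Setup: $\mathcal{Z}$ (instance space) and $\mathcal{W}$ (hypothesis space) are measurable spaces and $\ell:\mathcal{W}\times\mathcal{Z}\to[0,\infty)$ is a measurable loss. $\mu$ (test distribution) and $\mu'$ (training distribution) are probability distributions on $\mathcal{Z}$. The training set is $S'=(Z'_1,\dots,Z'_n)$ with $Z'_i$ i.i.d. $\sim\mu'$. A learning algorithm $\mathsf{A}$ is a Markov kernel from $\mathcal{Z}^n$ to $\mathcal{W}$, and $W'=\mathsf{A}(S')$. For $w\in\mathcal{W}$, $L_\mu(w)=\mathbb{E}_{Z\sim\mu}[\ell(w,Z)]$, and for $s=(z_1,\dots,z_n)$, $L_s(w)=\frac1n\sum_{i=1}^n\ell(w,z_i)$. The generalization error is $\mathrm{gen}(\mu,\mu',\mathsf{A})=\mathbb{E}[L_\mu(W')-L_{S'}(W')]$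 (all expectations assumed well defined). $I(\cdot;\cdot)$ denotes mutual information. *)

theory Defs
  imports "HOL-Probability.Probability"
begin

text \<open>Kullback-Leibler divergence D(P || Q) with values in the extended reals
  (natural logarithm): infinite unless P is absolutely continuous w.r.t. Q;
  otherwise the integral of f ln f with f = dP/dQ, where the positive and
  negative parts are integrated separately (the negative part is always
  finite when Q is a probability measure).\<close>
definition KL_div :: "'a measure \<Rightarrow> 'a measure \<Rightarrow> ereal" where
  "KL_div P Q =
     (if sets P = sets Q \<and> absolutely_continuous Q P then
        (let f = (\<lambda>x. enn2real (RN_deriv Q P x)) in
           enn2ereal (\<integral>\<^sup>+ x. ennreal (f x * ln (f x)) \<partial>Q)
         - enn2ereal (\<integral>\<^sup>+ x. ennreal (- (f x * ln (f x))) \<partial>Q))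
      else \<infinity>)"

definition mutual_info :: "'a measure \<Rightarrow> 'b measure \<Rightarrow> ('a \<times> 'b) measure \<Rightarrow> ereal" where
  "mutual_info A B P = KL_div P (distr P A fst \<Otimes>\<^sub>M distr P B snd)"

definition joint_law :: "'a measure \<Rightarrow> 'b measure \<Rightarrow> 'a measure \<Rightarrow> ('a \<Rightarrow> 'b measure) \<Rightarrow> ('a \<times> 'b) measure" where
  "joint_law A B M K = M \<bind> (\<lambda>x. K x \<bind> (\<lambda>y. return (A \<Otimes>\<^sub>M B) (x, y)))"

definition pop_risk :: "('w \<Rightarrow> 'z \<Rightarrow> real) \<Rightarrow> 'z measure \<Rightarrow> 'w \<Rightarrow> ennreal" where
  "pop_risk l \<mu> w = (\<integral>\<^sup>+ z. ennreal (l w z) \<partial>\<mu>)"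

definition emp_risk :: "('w \<Rightarrow> 'z \<Rightarrow> real) \<Rightarrow> nat \<Rightarrow> (nat \<Rightarrow> 'z) \<Rightarrow> 'w \<Rightarrow> real" where
  "emp_risk l n s w = (1 / real n) * (\<Sum>i<n. l w (s i))"

definition gen_err :: "'z measure \<Rightarrow> 'w measure \<Rightarrow> ('w \<Rightarrow> 'z \<Rightarrow> real) \<Rightarrow> 'z measure \<Rightarrow> 'z measure
    \<Rightarrow> nat \<Rightarrow> ((nat \<Rightarrow> 'z) \<Rightarrow> 'w measure) \<Rightarrow> ereal" where
  "gen_err Z W l \<mu> \<mu>' n A =
     (let J = joint_law (PiM {..<n} (\<lambda>_. Z)) W (PiM {..<n} (\<lambda>_. \<mu>')) A in
       enn2ereal (\<integral>\<^sup>+ p. pop_risk l \<mu> (snd p) \<partial>J)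
     - enn2ereal (\<integral>\<^sup>+ p. ennreal (emp_risk l n (fst p) (snd p)) \<partial>J))"

definition gen_err_defined :: "'z measure \<Rightarrow> 'w measure \<Rightarrow> ('w \<Rightarrow> 'z \<Rightarrow> real) \<Rightarrow> 'z measure \<Rightarrow> 'z measure
    \<Rightarrow> nat \<Rightarrow> ((nat \<Rightarrow> 'z) \<Rightarrow> 'w measure) \<Rightarrow> bool" where
  "gen_err_defined Z W l \<mu> \<mu>' n A =
     (let J = joint_law (PiM {..<n} (\<lambda>_. Z)) W (PiM {..<n} (\<lambda>_. \<mu>')) A in
       \<not> ((\<integral>\<^sup>+ p. pop_risk l \<mu> (snd p) \<partial>J) = \<infinity> \<and>
          (\<integral>\<^sup>+ p. ennreal (emp_risk l n (fst p) (snd p)) \<partial>J) = \<infinity>))"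

text \<open>D_2(r) = sup over Markov kernels P_{What|Z'} from Z to W with I(What;Z') <= r
  of E[L_mu(What) - l(What,Z')], Z' ~ mu' (single sample); only kernels for which
  the expectation is well defined (not of the form infinity - infinity) are included.\<close>
definition D2 :: "'z measure \<Rightarrow> 'w measure \<Rightarrow> ('w \<Rightarrow> 'z \<Rightarrow> real) \<Rightarrow> 'z measure \<Rightarrow> 'z measure
    \<Rightarrow> ereal \<Rightarrow> ereal" where
  "D2 Z W l \<mu> \<mu>' r = Sup
     { enn2ereal (\<integral>\<^sup>+ p. pop_risk l \<mu> (snd p) \<partial>J) - enn2ereal (\<integral>\<^sup>+ p. ennreal (l (snd p) (fst p)) \<partial>J)
     | K J. K \<in> measurable Z (prob_algebra W) \<and> J = joint_law Z W \<mu>' K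
          \<and> mutual_info Z W J \<le> r
          \<and> \<not> ((\<integral>\<^sup>+ p. pop_risk l \<mu> (snd p) \<partial>J) = \<infinity> \<and>
               (\<integral>\<^sup>+ p. ennreal (l (snd p) (fst p)) \<partial>J) = \<infinity>) }"

end

theory Submission
  imports Defs
begin

text \<open>From an algorithm \<open>A\<close> trained on \<open>n\<close> samples build a single-sample algorithm \<open>K\<close>:
  given \<open>z\<close>, draw a fresh training set, plant \<open>z\<close> at a uniformly random position and run \<open>A\<close>.
  With \<open>Z' \<sim> \<mu>'\<close>, the pair \<open>(Z', K Z')\<close> has the same hypothesis marginal \<open>\<nu>\<close> as \<open>A(S')\<close>, and its
  expected single-sample loss is the expected empirical risk of \<open>A(S')\<close>. So the generalization
  error of \<open>A\<close> is one of the values in the supremum defining \<open>D\<^sub>2\<close>, and it remains to show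
  \<open>I(Z'; K Z') \<le> I(S'; A(S')) / n\<close>. Let \<open>f\<close> be the density of the law of \<open>(S', A(S'))\<close> with
  respect to \<open>\<mu>'\<^sup>n \<otimes> \<nu>\<close> and \<open>g\<close> that of the law of \<open>(Z', K Z')\<close> with respect to \<open>\<mu>' \<otimes> \<nu>\<close>.
  Averaging over the planted position gives \<open>n \<integral> g ln g = \<Sum>\<^sub>i \<integral> f(s, w) ln g(s\<^sub>i, w)\<close>, and since
  \<open>\<integral> g(z, w) d\<mu>'(z) = 1\<close> for \<open>\<nu>\<close>-almost every \<open>w\<close>, the product \<open>\<Prod>\<^sub>i g(s\<^sub>i, w)\<close> is again a
  probability density with respect to \<open>\<mu>'\<^sup>n \<otimes> \<nu>\<close>. Gibbs' inequality
  \<open>\<integral> f ln f \<ge> \<integral> f ln \<Prod>\<^sub>i g(s\<^sub>i, w)\<close> finishes the proof.\<close>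

section \<open>Product measures and densities\<close>

lemma emeasure_distr_eq_nn_integral:
  assumes "f \<in> M \<rightarrow>\<^sub>M N" "B \<in> sets N"
  shows "emeasure (distr M N f) B = (\<integral>\<^sup>+x. indicator B (f x) \<partial>M)"
proof -
  have "emeasure (distr M N f) B = (\<integral>\<^sup>+x. indicator B x \<partial>distr M N f)"
    using assms(2) by simp
  also have "\<dots> = (\<integral>\<^sup>+x. indicator B (f x) \<partial>M)"
    by (rule nn_integral_distr[OF assms(1)]) (use assms(2) in simp)
  finally show ?thesis .
qed

lemma measurable_fun_upd_pair:
  assumes "i \<in> I"
  shows "(\<lambda>p. (snd p)(i := fst p)) \<in> N \<Otimes>\<^sub>M PiM I (\<lambda>_. N) \<rightarrow>\<^sub>M PiM I (\<lambda>_. N)"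
  by (rule measurable_fun_upd[where J=I]) (use assms in auto)

lemma measurable_fun_upd_const:
  assumes "i \<in> I" "z \<in> space N"
  shows "(\<lambda>s. s(i := z)) \<in> PiM I (\<lambda>_. N) \<rightarrow>\<^sub>M PiM I (\<lambda>_. N)"
  by (rule measurable_fun_upd[where J=I]) (use assms in auto)

lemma nn_integral_PiM_fun_upd:
  assumes N: "prob_space N" and I: "finite I" "i \<in> I" and F: "F \<in> borel_measurable (PiM I (\<lambda>_. N))"
  shows "(\<integral>\<^sup>+z. \<integral>\<^sup>+s. F (s(i := z)) \<partial>PiM I (\<lambda>_. N) \<partial>N) = (\<integral>\<^sup>+s. F s \<partial>PiM I (\<lambda>_. N))"
proof -
  interpret product_prob_space "\<lambda>_. N" by (rule product_prob_spaceI) (rule N)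
  define I' where "I' = I - {i}"
  have I': "I = insert i I'" "finite I'" "i \<notin> I'" using I by (auto simp: I'_def)
  have F': "F \<in> borel_measurable (PiM (insert i I') (\<lambda>_. N))" using F I' by simp
  have "(\<integral>\<^sup>+s. F s \<partial>PiM I (\<lambda>_. N)) = (\<integral>\<^sup>+z. \<integral>\<^sup>+s. F (s(i := z)) \<partial>PiM I' (\<lambda>_. N) \<partial>N)"
    unfolding I'(1) by (rule product_nn_integral_insert_rev[OF I'(2,3) F'])
  also have "\<dots> = (\<integral>\<^sup>+z. \<integral>\<^sup>+s. F (s(i := z)) \<partial>PiM I (\<lambda>_. N) \<partial>N)"
  proof (rule nn_integral_cong)
    fix z assume z: "z \<in> space N"
    have Fz: "(\<lambda>s. F (s(i := z))) \<in> borel_measurable (PiM (insert i I') (\<lambda>_. N))"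
      using measurable_comp[OF measurable_fun_upd_const[of i "insert i I'" z N] F'] z
      by (simp add: comp_def)
    have "(\<integral>\<^sup>+s. F (s(i := z)) \<partial>PiM I (\<lambda>_. N))
        = (\<integral>\<^sup>+s. \<integral>\<^sup>+y. F ((s(i := y))(i := z)) \<partial>N \<partial>PiM I' (\<lambda>_. N))"
      unfolding I'(1) by (rule product_nn_integral_insert[OF I'(2,3) Fz])
    also have "\<dots> = (\<integral>\<^sup>+s. F (s(i := z)) \<partial>PiM I' (\<lambda>_. N))"
      by (simp add: prob_space.emeasure_space_1[OF N])
    finally show "(\<integral>\<^sup>+s. F (s(i := z)) \<partial>PiM I' (\<lambda>_. N))
        = (\<integral>\<^sup>+s. F (s(i := z)) \<partial>PiM I (\<lambda>_. N))" by simp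
  qed
  finally show ?thesis by simp
qed

lemma nn_integral_PiM_component:
  assumes N: "prob_space N" and I: "finite I" "i \<in> I" and G: "G \<in> borel_measurable N"
  shows "(\<integral>\<^sup>+s. G (s i) \<partial>PiM I (\<lambda>_. N)) = (\<integral>\<^sup>+z. G z \<partial>N)"
proof -
  have F: "(\<lambda>s. G (s i)) \<in> borel_measurable (PiM I (\<lambda>_. N))"
    using I by (intro measurable_compose[OF _ G] measurable_component_singleton)
  have "(\<integral>\<^sup>+s. G (s i) \<partial>PiM I (\<lambda>_. N)) = (\<integral>\<^sup>+z. \<integral>\<^sup>+s. G ((s(i := z)) i) \<partial>PiM I (\<lambda>_. N) \<partial>N)"
    by (rule nn_integral_PiM_fun_upd[OF N I F, symmetric])
  also have "\<dots> = (\<integral>\<^sup>+z. G z \<partial>N)"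
    using N by (simp add: prob_space.emeasure_space_1[OF prob_space_PiM])
  finally show ?thesis .
qed

lemma nn_integral_real_RN_deriv:
  assumes R: "sigma_finite_measure R" and M: "prob_space M" and ac: "absolutely_continuous R M"
    and s: "sets M = sets R" and h: "h \<in> borel_measurable R"
  shows "(\<integral>\<^sup>+x. h x \<partial>M) = (\<integral>\<^sup>+x. ennreal (enn2real (RN_deriv R M x)) * h x \<partial>R)"
proof -
  interpret R: sigma_finite_measure R by (rule R)
  have fin: "AE x in R. RN_deriv R M x \<noteq> \<infinity>"
    by (rule R.RN_deriv_finite[OF prob_space_imp_sigma_finite[OF M] ac s])
  have "(\<integral>\<^sup>+x. h x \<partial>M) = (\<integral>\<^sup>+x. RN_deriv R M x * h x \<partial>R)"
    by (rule R.RN_deriv_nn_integral[OF ac s h])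
  also have "\<dots> = (\<integral>\<^sup>+x. ennreal (enn2real (RN_deriv R M x)) * h x \<partial>R)"
    by (rule nn_integral_cong_AE) (use fin in \<open>auto simp: less_top\<close>)
  finally show ?thesis .
qed

section \<open>Joint laws\<close>

lemma measurable_joint_law_kernel:
  assumes K: "K \<in> X \<rightarrow>\<^sub>M prob_algebra Y"
  shows "(\<lambda>x. K x \<bind> (\<lambda>y. return (X \<Otimes>\<^sub>M Y) (x, y))) \<in> X \<rightarrow>\<^sub>M prob_algebra (X \<Otimes>\<^sub>M Y)"
proof (rule measurable_bind_prob_space2[OF K])
  show "(\<lambda>(x, y). return (X \<Otimes>\<^sub>M Y) (x, y)) \<in> X \<Otimes>\<^sub>M Y \<rightarrow>\<^sub>M prob_algebra (X \<Otimes>\<^sub>M Y)"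
    using measurable_return_prob_space[of "X \<Otimes>\<^sub>M Y"] by (simp add: case_prod_beta')
qed

context
  fixes X :: "'a measure" and Y :: "'b measure" and M :: "'a measure" and K :: "'a \<Rightarrow> 'b measure"
  assumes M: "prob_space M" "sets M = sets X" and K: "K \<in> X \<rightarrow>\<^sub>M prob_algebra Y"
begin

lemma prob_space_joint_law: "prob_space (joint_law X Y M K)"
  and sets_joint_law: "sets (joint_law X Y M K) = sets (X \<Otimes>\<^sub>M Y)"
proof -
  have M': "M \<in> space (prob_algebra X)" using M by (simp add: space_prob_algebra)
  note k = measurable_joint_law_kernel[OF K]
  show "prob_space (joint_law X Y M K)" unfolding joint_law_def by (rule prob_space_bind'[OF M' k])
  show "sets (joint_law X Y M K) = sets (X \<Otimes>\<^sub>M Y)" unfolding joint_law_def by (rule sets_bind'[OF M' k])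
qed

lemma space_joint_law: "space (joint_law X Y M K) = space (X \<Otimes>\<^sub>M Y)"
  by (rule sets_eq_imp_space_eq[OF sets_joint_law])

lemma nn_integral_joint_law:
  assumes h: "h \<in> borel_measurable (X \<Otimes>\<^sub>M Y)"
  shows "(\<integral>\<^sup>+p. h p \<partial>joint_law X Y M K) = (\<integral>\<^sup>+x. \<integral>\<^sup>+y. h (x, y) \<partial>K x \<partial>M)"
proof -
  have k: "(\<lambda>x. K x \<bind> (\<lambda>y. return (X \<Otimes>\<^sub>M Y) (x, y))) \<in> M \<rightarrow>\<^sub>M subprob_algebra (X \<Otimes>\<^sub>M Y)"
    unfolding measurable_cong_sets[OF M(2) refl]
    by (rule measurable_prob_algebraD[OF measurable_joint_law_kernel[OF K]])
  have "(\<integral>\<^sup>+p. h p \<partial>joint_law X Y M K)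
      = (\<integral>\<^sup>+x. \<integral>\<^sup>+p. h p \<partial>(K x \<bind> (\<lambda>y. return (X \<Otimes>\<^sub>M Y) (x, y))) \<partial>M)"
    unfolding joint_law_def by (rule nn_integral_bind[OF h k])
  also have "\<dots> = (\<integral>\<^sup>+x. \<integral>\<^sup>+y. h (x, y) \<partial>K x \<partial>M)"
  proof (rule nn_integral_cong)
    fix x assume "x \<in> space M"
    then have x: "x \<in> space X" using sets_eq_imp_space_eq[OF M(2)] by simp
    have sK: "sets (K x) = sets Y"
      using measurable_space[OF K x] by (simp add: space_prob_algebra)
    have r: "(\<lambda>y. return (X \<Otimes>\<^sub>M Y) (x, y)) \<in> K x \<rightarrow>\<^sub>M subprob_algebra (X \<Otimes>\<^sub>M Y)"
      using x by (simp add: measurable_cong_sets[OF sK refl])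
    have "(\<integral>\<^sup>+p. h p \<partial>(K x \<bind> (\<lambda>y. return (X \<Otimes>\<^sub>M Y) (x, y))))
        = (\<integral>\<^sup>+y. \<integral>\<^sup>+p. h p \<partial>return (X \<Otimes>\<^sub>M Y) (x, y) \<partial>K x)"
      by (rule nn_integral_bind[OF h r])
    also have "\<dots> = (\<integral>\<^sup>+y. h (x, y) \<partial>K x)"
    proof (rule nn_integral_cong)
      fix y assume "y \<in> space (K x)"
      then have "(x, y) \<in> space (X \<Otimes>\<^sub>M Y)"
        using x sets_eq_imp_space_eq[OF sK] by (simp add: space_pair_measure)
      then show "(\<integral>\<^sup>+p. h p \<partial>return (X \<Otimes>\<^sub>M Y) (x, y)) = h (x, y)"
        using h by (simp add: nn_integral_return)
    qed
    finally show "(\<integral>\<^sup>+p. h p \<partial>(K x \<bind> (\<lambda>y. return (X \<Otimes>\<^sub>M Y) (x, y)))) = (\<integral>\<^sup>+y. h (x, y) \<partial>K x)" .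
  qed
  finally show ?thesis .
qed

lemma distr_joint_law_fst: "distr (joint_law X Y M K) X fst = M"
proof (rule measure_eqI)
  fix B assume "B \<in> sets (distr (joint_law X Y M K) X fst)"
  then have B: "B \<in> sets X" by simp
  have fst: "fst \<in> joint_law X Y M K \<rightarrow>\<^sub>M X"
    unfolding measurable_cong_sets[OF sets_joint_law refl] by (rule measurable_fst)
  have "emeasure (distr (joint_law X Y M K) X fst) B = (\<integral>\<^sup>+x. \<integral>\<^sup>+y. indicator B x \<partial>K x \<partial>M)"
    using B by (simp add: emeasure_distr_eq_nn_integral[OF fst] nn_integral_joint_law)
  also have "\<dots> = (\<integral>\<^sup>+x. indicator B x \<partial>M)"
  proof (rule nn_integral_cong)
    fix x assume "x \<in> space M"
    then have "prob_space (K x)"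
      using measurable_space[OF K] sets_eq_imp_space_eq[OF M(2)] by (simp add: space_prob_algebra)
    then show "(\<integral>\<^sup>+y. indicator B x \<partial>K x) = indicator B x"
      by (simp add: prob_space.emeasure_space_1)
  qed
  also have "\<dots> = emeasure M B" using B M by simp
  finally show "emeasure (distr (joint_law X Y M K) X fst) B = emeasure M B" .
qed (use M in simp)

end

lemma measurable_pop_risk:
  assumes l: "(\<lambda>(w, z). l w z) \<in> borel_measurable (W \<Otimes>\<^sub>M Z)"
    and \<mu>: "sigma_finite_measure \<mu>" "sets \<mu> = sets Z"
  shows "pop_risk l \<mu> \<in> borel_measurable W"
proof -
  interpret sigma_finite_measure \<mu> by (rule \<mu>(1))
  have "(\<lambda>(w, z). ennreal (l w z)) \<in> borel_measurable (W \<Otimes>\<^sub>M \<mu>)"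
    using l unfolding measurable_cong_sets[OF sets_pair_measure_cong[OF refl \<mu>(2)] refl]
    by measurable
  then show ?thesis
    unfolding pop_risk_def[abs_def] using borel_measurable_nn_integral by simp
qed

section \<open>Gibbs' inequality\<close>

lemma neg_mult_ln_le_1:
  fixes x :: real
  assumes "0 \<le> x"
  shows "ennreal (- (x * ln x)) \<le> 1"
proof (cases "x = 0")
  case False
  with assms have x: "0 < x" by simp
  have "ln (1 / x) \<le> 1 / x - 1" by (rule ln_le_minus_one) (use x in simp)
  then have "x * (- ln x) \<le> x * (1 / x - 1)"
    using x by (intro mult_left_mono) (auto simp: ln_div)
  then show ?thesis using x by (simp add: algebra_simps ennreal_le_1)
qed simp

lemma nn_integral_neg_mult_ln_neq_top:
  assumes R: "finite_measure R" and f: "\<And>x. 0 \<le> f x"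
  shows "(\<integral>\<^sup>+x. ennreal (- (f x * ln (f x))) \<partial>R) \<noteq> \<top>"
proof -
  have "(\<integral>\<^sup>+x. ennreal (- (f x * ln (f x))) \<partial>R) \<le> (\<integral>\<^sup>+x. 1 \<partial>R)"
    by (intro nn_integral_mono neg_mult_ln_le_1 f)
  also have "\<dots> < \<top>" using finite_measure.emeasure_finite[OF R] by (simp add: less_top)
  finally show ?thesis by simp
qed

lemma diff_prod_le_mult_ln_diff_sum:
  fixes x :: real and y :: "nat \<Rightarrow> real"
  assumes x: "0 \<le> x" and y: "\<forall>i<n. 0 \<le> y i" and pos: "x = 0 \<or> (\<forall>i<n. 0 < y i)"
  shows "x - (\<Prod>i<n. y i) \<le> x * ln x - (\<Sum>i<n. x * ln (y i))"
proof (cases "x = 0")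
  case True
  then show ?thesis using y by (auto intro!: prod_nonneg)
next
  case False
  with x pos have x: "0 < x" and y: "\<forall>i<n. 0 < y i" by auto
  define G where "G = (\<Prod>i<n. y i)"
  have G: "0 < G" unfolding G_def using y by (auto intro: prod_pos)
  have lnG: "ln G = (\<Sum>i<n. ln (y i))" unfolding G_def using y by (subst ln_prod) auto
  have "ln (G / x) \<le> G / x - 1" by (rule ln_le_minus_one) (use G x in simp)
  then have "x * (ln G - ln x) \<le> x * (G / x - 1)"
    using G x by (intro mult_left_mono) (auto simp: ln_div)
  then show ?thesis using x lnG by (simp add: G_def sum_distrib_left[symmetric] algebra_simps)
qed

lemma ennreal_parts_le:
  fixes a :: "nat \<Rightarrow> real"
  assumes "0 \<le> c" "0 \<le> d" "(\<Sum>i<n. a i) + c - d \<le> b"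
  shows "(\<Sum>i<n. ennreal (a i)) + ennreal c + ennreal (- b)
    \<le> ennreal b + (\<Sum>i<n. ennreal (- a i)) + ennreal d"
proof -
  have pos: "ennreal t = ennreal (max t 0)" for t :: real
    by (cases "0 \<le> t") (auto simp: max_def ennreal_neg)
  have split: "max t 0 - max (- t) 0 = t" for t :: real by (simp add: max_def)
  have sum: "(\<Sum>i<n. ennreal (u i)) = ennreal (\<Sum>i<n. max (u i) 0)" for u :: "nat \<Rightarrow> real"
  proof -
    have "(\<Sum>i<n. ennreal (u i)) = (\<Sum>i<n. ennreal (max (u i) 0))" by (simp only: pos[symmetric])
    also have "\<dots> = ennreal (\<Sum>i<n. max (u i) 0)" by (rule sum_ennreal) simp
    finally show ?thesis .
  qed
  have "(\<Sum>i<n. max (a i) 0) - (\<Sum>i<n. max (- a i) 0) = (\<Sum>i<n. a i)"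
    by (simp add: sum_subtractf[symmetric] split)
  then have "(\<Sum>i<n. max (a i) 0) + c + max (- b) 0 \<le> max b 0 + (\<Sum>i<n. max (- a i) 0) + d"
    using assms(3) split[of b] by linarith
  then have "ennreal ((\<Sum>i<n. max (a i) 0) + c + max (- b) 0)
      \<le> ennreal (max b 0 + (\<Sum>i<n. max (- a i) 0) + d)"
    by (rule ennreal_leI)
  then show ?thesis
    unfolding sum using assms(1,2) by (simp add: ennreal_plus sum_nonneg)
qed

text \<open>Gibbs' inequality \<open>\<integral> f ln f \<ge> \<Sum>\<^sub>i \<integral> f ln g\<^sub>i\<close> for probability densities \<open>f\<close> and \<open>\<Prod>\<^sub>i g\<^sub>i\<close>,
  with every integral split into positive and negative parts so that it remains meaningful
  when some of them are infinite.\<close>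
lemma nn_integral_gibbs:
  fixes f :: "'a \<Rightarrow> real" and g :: "nat \<Rightarrow> 'a \<Rightarrow> real"
  assumes f: "f \<in> borel_measurable R" "\<And>x. 0 \<le> f x"
    and g: "\<And>i. i < n \<Longrightarrow> g i \<in> borel_measurable R" "\<And>i x. i < n \<Longrightarrow> 0 \<le> g i x"
    and int_f: "(\<integral>\<^sup>+x. ennreal (f x) \<partial>R) = 1"
    and int_g: "(\<integral>\<^sup>+x. ennreal (\<Prod>i<n. g i x) \<partial>R) = 1"
    and supp: "AE x in R. f x = 0 \<or> (\<forall>i<n. 0 < g i x)"
  shows "(\<Sum>i<n. \<integral>\<^sup>+x. ennreal (f x * ln (g i x)) \<partial>R) + (\<integral>\<^sup>+x. ennreal (- (f x * ln (f x))) \<partial>R)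
    \<le> (\<integral>\<^sup>+x. ennreal (f x * ln (f x)) \<partial>R) + (\<Sum>i<n. \<integral>\<^sup>+x. ennreal (- (f x * ln (g i x))) \<partial>R)"
proof -
  have "AE x in R. (\<Sum>i<n. ennreal (f x * ln (g i x))) + ennreal (f x) + ennreal (- (f x * ln (f x)))
      \<le> ennreal (f x * ln (f x)) + (\<Sum>i<n. ennreal (- (f x * ln (g i x)))) + ennreal (\<Prod>i<n. g i x)"
    using supp
  proof eventually_elim
    case (elim x)
    have "f x - (\<Prod>i<n. g i x) \<le> f x * ln (f x) - (\<Sum>i<n. f x * ln (g i x))"
      using elim f(2) g(2) by (intro diff_prod_le_mult_ln_diff_sum) auto
    then show ?case
      using f(2) g(2) by (intro ennreal_parts_le) (auto intro: prod_nonneg)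
  qed
  then have "(\<integral>\<^sup>+x. (\<Sum>i<n. ennreal (f x * ln (g i x))) + ennreal (f x) + ennreal (- (f x * ln (f x))) \<partial>R)
      \<le> (\<integral>\<^sup>+x. ennreal (f x * ln (f x)) + (\<Sum>i<n. ennreal (- (f x * ln (g i x)))) + ennreal (\<Prod>i<n. g i x) \<partial>R)"
    by (rule nn_integral_mono_AE)
  moreover have "(\<lambda>x. ennreal (\<Prod>i<n. g i x)) \<in> borel_measurable R"
    using g(1) by (intro measurable_compose[OF _ measurable_ennreal] borel_measurable_prod) auto
  moreover have "(\<integral>\<^sup>+x. (\<Sum>i<n. ennreal (f x * ln (g i x))) \<partial>R)
      = (\<Sum>i<n. \<integral>\<^sup>+x. ennreal (f x * ln (g i x)) \<partial>R)"
    and "(\<integral>\<^sup>+x. (\<Sum>i<n. ennreal (- (f x * ln (g i x)))) \<partial>R)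
      = (\<Sum>i<n. \<integral>\<^sup>+x. ennreal (- (f x * ln (g i x))) \<partial>R)"
    using f(1) g(1) by (intro nn_integral_sum; simp)+
  ultimately show ?thesis
    using f(1) g(1) int_f int_g
    by (simp add: nn_integral_add borel_measurable_sum)
qed

lemma enn2ereal_diff_le_divide:
  fixes Xp Xm Yp Ym :: ennreal and n :: nat
  assumes n: "1 \<le> n" and Xm: "Xm \<noteq> \<top>" and Ym: "Ym \<noteq> \<top>"
    and le: "of_nat n * Yp + Xm \<le> Xp + of_nat n * Ym"
  shows "enn2ereal Yp - enn2ereal Ym \<le> (enn2ereal Xp - enn2ereal Xm) / ereal (real n)"
proof -
  obtain xm where xm: "Xm = ennreal xm" "0 \<le> xm" using Xm by (cases Xm) auto
  obtain ym where ym: "Ym = ennreal ym" "0 \<le> ym" using Ym by (cases Ym) auto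
  have n_pos: "0 < real n" using n by simp
  have of_nat_n: "of_nat n = ennreal (real n)" by (rule ennreal_of_nat_eq_real_of_nat)
  show ?thesis
  proof (cases "Xp = \<top>")
    case True
    then show ?thesis using n_pos xm by (simp add: enn2ereal_top)
  next
    case False
    then obtain xp where xp: "Xp = ennreal xp" "0 \<le> xp" by (cases Xp) auto
    have "of_nat n * Yp \<le> Xp + of_nat n * Ym"
      using le by (metis le_iff_add order.trans)
    also have "\<dots> < \<top>"
      using xp ym by (simp add: of_nat_n ennreal_mult[symmetric] ennreal_plus[symmetric] del: ennreal_plus)
    finally have "Yp \<noteq> \<top>" using n by (auto simp: ennreal_mult_eq_top_iff)
    then obtain yp where yp: "Yp = ennreal yp" "0 \<le> yp" by (cases Yp) auto
    have "ennreal (real n * yp + xm) \<le> ennreal (xp + real n * ym)"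
      using le xp xm ym yp
      by (simp add: of_nat_n ennreal_mult[symmetric] ennreal_plus[symmetric] del: ennreal_plus)
    then have "(yp - ym) * real n \<le> xp - xm"
      using xp ym by (subst (asm) ennreal_le_iff) (auto simp: algebra_simps)
    then have "yp - ym \<le> (xp - xm) / real n"
      by (subst pos_le_divide_eq[OF n_pos])
    then show ?thesis using xp xm ym yp n_pos by simp
  qed
qed

section \<open>The single-sample algorithm\<close>

locale single_sample_algorithm =
  fixes Z :: "'z measure" and W :: "'w measure" and \<mu>' :: "'z measure" and n :: nat
    and A :: "(nat \<Rightarrow> 'z) \<Rightarrow> 'w measure"
  assumes \<mu>': "prob_space \<mu>'" "sets \<mu>' = sets Z" and n: "1 \<le> n"
    and A_measurable: "A \<in> PiM {..<n} (\<lambda>_. Z) \<rightarrow>\<^sub>M prob_algebra W"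
begin

abbreviation "S \<equiv> PiM {..<n} (\<lambda>_. \<mu>')"
abbreviation "SZ \<equiv> PiM {..<n} (\<lambda>_. Z)"

lemma sets_S: "sets S = sets SZ"
  by (rule sets_PiM_cong) (auto simp: \<mu>')

lemma space_\<mu>': "space \<mu>' = space Z"
  by (rule sets_eq_imp_space_eq[OF \<mu>'(2)])

lemma A_measurable_S: "A \<in> S \<rightarrow>\<^sub>M prob_algebra W"
  unfolding measurable_cong_sets[OF sets_S refl] by (rule A_measurable)

lemma prob_space_S: "prob_space S"
proof -
  interpret product_prob_space "\<lambda>_. \<mu>'" by (rule product_prob_spaceI) (rule \<mu>'(1))
  show ?thesis by (rule prob_space_PiM) (simp add: \<mu>')
qed

definition planted :: "nat \<Rightarrow> 'z \<Rightarrow> 'w measure" where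
  "planted i z = S \<bind> (\<lambda>s. A (s(i := z)))"

lemma measurable_planted:
  assumes i: "i < n"
  shows "planted i \<in> Z \<rightarrow>\<^sub>M prob_algebra W"
proof -
  have S: "S \<in> space (prob_algebra S)" using prob_space_S by (simp add: space_prob_algebra)
  have "Z \<Otimes>\<^sub>M S \<rightarrow>\<^sub>M S = \<mu>' \<Otimes>\<^sub>M S \<rightarrow>\<^sub>M S"
    by (rule measurable_cong_sets) (auto simp: \<mu>' intro!: sets_pair_measure_cong)
  then have "(\<lambda>p. (snd p)(i := fst p)) \<in> Z \<Otimes>\<^sub>M S \<rightarrow>\<^sub>M S"
    using measurable_fun_upd_pair[of i "{..<n}" \<mu>'] i by simp
  then have "(\<lambda>(z, s). A (s(i := z))) \<in> Z \<Otimes>\<^sub>M S \<rightarrow>\<^sub>M prob_algebra W"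
    using measurable_comp[OF _ A_measurable_S] by (simp add: comp_def case_prod_beta')
  then show ?thesis unfolding planted_def
    by (rule measurable_bind_prob_space2[OF measurable_const[OF S]])
qed

text \<open>The guard \<open>if i < n then i else 0\<close> only makes the family total on \<open>count_space UNIV\<close>;
  it never fires on the support of the uniform distribution.\<close>
definition K :: "'z \<Rightarrow> 'w measure" where
  "K z = measure_pmf (pmf_of_set {..<n}) \<bind> (\<lambda>i. planted (if i < n then i else 0) z)"

lemma nn_integral_K:
  assumes z: "z \<in> space Z" and h: "h \<in> borel_measurable W"
  shows "(\<integral>\<^sup>+w. h w \<partial>K z) = (\<Sum>i<n. \<integral>\<^sup>+w. h w \<partial>planted i z) / of_nat n"
proof -
  have k: "(\<lambda>i. planted (if i < n then i else 0) z)
      \<in> measure_pmf (pmf_of_set {..<n}) \<rightarrow>\<^sub>M subprob_algebra W"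
    using measurable_space[OF measurable_prob_algebraD[OF measurable_planted] z] n
    by (auto simp: Pi_iff)
  have "{..<n} \<noteq> {}" using n by (auto simp: lessThan_empty_iff)
  then have "(\<integral>\<^sup>+w. h w \<partial>K z)
      = (\<Sum>i<n. \<integral>\<^sup>+w. h w \<partial>planted (if i < n then i else 0) z) / of_nat (card {..<n})"
    unfolding K_def nn_integral_bind[OF h k] by (rule nn_integral_pmf_of_set) simp
  then show ?thesis by simp
qed

lemma measurable_K: "K \<in> Z \<rightarrow>\<^sub>M prob_algebra W"
proof (rule measurable_prob_algebraI)
  have pmf: "measure_pmf (pmf_of_set {..<n}) \<in> space (prob_algebra (count_space UNIV))"
    by (simp add: space_prob_algebra prob_space_measure_pmf)
  have K_space: "K z \<in> space (prob_algebra W)" if z: "z \<in> space Z" for z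
  proof -
    have "(\<lambda>i. planted (if i < n then i else 0) z) \<in> count_space UNIV \<rightarrow>\<^sub>M prob_algebra W"
      using measurable_space[OF measurable_planted z] n by (auto simp: Pi_iff)
    then have "(\<lambda>_::'z. K z) \<in> count_space {z} \<rightarrow>\<^sub>M prob_algebra W"
      unfolding K_def by (rule measurable_bind_prob_space[OF measurable_const[OF pmf]])
    from measurable_space[OF this, of z] show ?thesis by simp
  qed
  then show "\<And>z. z \<in> space Z \<Longrightarrow> prob_space (K z)" by (simp add: space_prob_algebra)
  show "K \<in> Z \<rightarrow>\<^sub>M subprob_algebra W"
  proof (rule measurable_subprob_algebra)
    fix z assume "z \<in> space Z"
    then show "subprob_space (K z)" "sets (K z) = sets W" using K_space[of z]
      by (auto simp: space_prob_algebra intro: prob_space_imp_subprob_space)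
  next
    fix B assume B: "B \<in> sets W"
    have "(\<lambda>z. (\<Sum>i<n. emeasure (planted i z) B) / of_nat n) \<in> borel_measurable Z"
      using measurable_emeasure_kernel[OF measurable_prob_algebraD[OF measurable_planted] B]
      by measurable
    then show "(\<lambda>z. emeasure (K z) B) \<in> borel_measurable Z"
    proof (rule measurable_cong[THEN iffD1, rotated])
      fix z assume z: "z \<in> space Z"
      have planted: "(\<integral>\<^sup>+w. indicator B w \<partial>planted i z) = emeasure (planted i z) B" if "i < n" for i
        using B measurable_space[OF measurable_planted[OF that] z]
        by (subst nn_integral_indicator) (auto simp: space_prob_algebra)
      have "emeasure (K z) B = (\<integral>\<^sup>+w. indicator B w \<partial>K z)"
        using K_space[OF z] B by (simp add: space_prob_algebra)
      also have "\<dots> = (\<Sum>i<n. emeasure (planted i z) B) / of_nat n"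
        using B z planted by (simp add: nn_integral_K)
      finally show "(\<Sum>i<n. emeasure (planted i z) B) / of_nat n = emeasure (K z) B" by simp
    qed
  qed
qed

definition P :: "((nat \<Rightarrow> 'z) \<times> 'w) measure" where "P = joint_law SZ W S A"
definition Q :: "('z \<times> 'w) measure" where "Q = joint_law Z W \<mu>' K"

lemma prob_space_P: "prob_space P" and sets_P: "sets P = sets (SZ \<Otimes>\<^sub>M W)"
  and space_P: "space P = space (SZ \<Otimes>\<^sub>M W)"
  unfolding P_def using prob_space_S sets_S A_measurable
  by (simp_all add: prob_space_joint_law sets_joint_law space_joint_law)

lemma prob_space_Q: "prob_space Q" and sets_Q: "sets Q = sets (Z \<Otimes>\<^sub>M W)"
  unfolding Q_def using \<mu>' measurable_K by (simp_all add: prob_space_joint_law sets_joint_law)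

lemma distr_P_fst: "distr P SZ fst = S"
  unfolding P_def using prob_space_S sets_S A_measurable by (rule distr_joint_law_fst)

lemma distr_Q_fst: "distr Q Z fst = \<mu>'"
  unfolding Q_def using \<mu>' measurable_K by (rule distr_joint_law_fst)

lemma measurable_component_pair: "i < n \<Longrightarrow> (\<lambda>p. (fst p i, snd p)) \<in> SZ \<Otimes>\<^sub>M W \<rightarrow>\<^sub>M Z \<Otimes>\<^sub>M W"
  by measurable

lemma nn_integral_Q:
  assumes h: "h \<in> borel_measurable (Z \<Otimes>\<^sub>M W)"
  shows "(\<integral>\<^sup>+p. h p \<partial>Q) = (\<Sum>i<n. \<integral>\<^sup>+p. h (fst p i, snd p) \<partial>P) / of_nat n"
proof -
  define H where "H i s = (\<integral>\<^sup>+w. h (s i, w) \<partial>A s)" for i s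
  have A: "A \<in> S \<rightarrow>\<^sub>M subprob_algebra W" by (rule measurable_prob_algebraD[OF A_measurable_S])
  have SW: "S \<Otimes>\<^sub>M W \<rightarrow>\<^sub>M Z \<Otimes>\<^sub>M W = SZ \<Otimes>\<^sub>M W \<rightarrow>\<^sub>M Z \<Otimes>\<^sub>M W"
    by (rule measurable_cong_sets) (auto simp: sets_S intro!: sets_pair_measure_cong)
  have H: "H i \<in> borel_measurable S" if i: "i < n" for i
  proof -
    have "(\<lambda>(s, w). h (s i, w)) \<in> borel_measurable (S \<Otimes>\<^sub>M W)"
      using measurable_comp[OF measurable_component_pair[OF i, folded SW] h]
      by (simp add: comp_def case_prod_beta')
    then show ?thesis unfolding H_def by (rule nn_integral_measurable_subprob_algebra2[OF _ A])
  qed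
  have P_component: "(\<integral>\<^sup>+p. h (fst p i, snd p) \<partial>P) = (\<integral>\<^sup>+s. H i s \<partial>S)" if i: "i < n" for i
  proof -
    have "(\<lambda>p. h (fst p i, snd p)) \<in> borel_measurable (SZ \<Otimes>\<^sub>M W)"
      using measurable_comp[OF measurable_component_pair[OF i] h] by (simp add: comp_def)
    then show ?thesis unfolding P_def H_def
      using prob_space_S sets_S A_measurable by (simp add: nn_integral_joint_law)
  qed
  have planted: "(\<integral>\<^sup>+w. h (z, w) \<partial>planted i z) = (\<integral>\<^sup>+s. H i (s(i := z)) \<partial>S)"
    if z: "z \<in> space Z" and i: "i < n" for z i
  proof -
    have "(\<lambda>s. s(i := z)) \<in> S \<rightarrow>\<^sub>M S"
      by (rule measurable_fun_upd_const) (use i z space_\<mu>' in auto)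
    then have k: "(\<lambda>s. A (s(i := z))) \<in> S \<rightarrow>\<^sub>M subprob_algebra W"
      using measurable_comp[OF _ A] by (simp add: comp_def)
    have "(\<lambda>w. h (z, w)) \<in> borel_measurable W" using h z by measurable
    then show ?thesis unfolding planted_def H_def by (simp add: nn_integral_bind[OF _ k])
  qed
  have planted_measurable: "(\<lambda>z. \<integral>\<^sup>+s. H i (s(i := z)) \<partial>S) \<in> borel_measurable \<mu>'"
    if i: "i < n" for i
  proof -
    have f: "(\<lambda>(z, s). H i (s(i := z))) \<in> borel_measurable (\<mu>' \<Otimes>\<^sub>M S)"
      using measurable_comp[OF measurable_fun_upd_pair[of i "{..<n}" \<mu>'] H[OF i]] i
      by (simp add: comp_def case_prod_beta')
    have "(\<lambda>_. S) \<in> \<mu>' \<rightarrow>\<^sub>M subprob_algebra S"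
      using prob_space_S
      by (intro measurable_const) (simp add: space_subprob_algebra prob_space_imp_subprob_space)
    from nn_integral_measurable_subprob_algebra2[OF f this] show ?thesis by simp
  qed
  have "(\<integral>\<^sup>+p. h p \<partial>Q) = (\<integral>\<^sup>+z. \<integral>\<^sup>+w. h (z, w) \<partial>K z \<partial>\<mu>')"
    unfolding Q_def using \<mu>' measurable_K h by (simp add: nn_integral_joint_law)
  also have "\<dots> = (\<integral>\<^sup>+z. (\<Sum>i<n. \<integral>\<^sup>+s. H i (s(i := z)) \<partial>S) / of_nat n \<partial>\<mu>')"
  proof (rule nn_integral_cong)
    fix z assume "z \<in> space \<mu>'"
    then have z: "z \<in> space Z" by (simp add: space_\<mu>')
    have "(\<lambda>w. h (z, w)) \<in> borel_measurable W" using h z by measurable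
    then show "(\<integral>\<^sup>+w. h (z, w) \<partial>K z) = (\<Sum>i<n. \<integral>\<^sup>+s. H i (s(i := z)) \<partial>S) / of_nat n"
      using nn_integral_K[OF z] planted[OF z] by simp
  qed
  also have "\<dots> = (\<Sum>i<n. \<integral>\<^sup>+z. \<integral>\<^sup>+s. H i (s(i := z)) \<partial>S \<partial>\<mu>') / of_nat n"
  proof -
    have "(\<integral>\<^sup>+z. (\<Sum>i<n. \<integral>\<^sup>+s. H i (s(i := z)) \<partial>S) \<partial>\<mu>')
        = (\<Sum>i<n. \<integral>\<^sup>+z. \<integral>\<^sup>+s. H i (s(i := z)) \<partial>S \<partial>\<mu>')"
      by (rule nn_integral_sum) (use planted_measurable in auto)
    then show ?thesis using planted_measurable by (simp add: nn_integral_divide borel_measurable_sum)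
  qed
  also have "\<dots> = (\<Sum>i<n. \<integral>\<^sup>+s. H i s \<partial>S) / of_nat n"
    using nn_integral_PiM_fun_upd[OF \<mu>'(1) finite_lessThan _ H] by simp
  also have "\<dots> = (\<Sum>i<n. \<integral>\<^sup>+p. h (fst p i, snd p) \<partial>P) / of_nat n"
    using P_component by simp
  finally show ?thesis .
qed

lemma of_nat_mult_nn_integral_Q:
  assumes h: "h \<in> borel_measurable (Z \<Otimes>\<^sub>M W)"
  shows "of_nat n * (\<integral>\<^sup>+p. h p \<partial>Q) = (\<Sum>i<n. \<integral>\<^sup>+p. h (fst p i, snd p) \<partial>P)"
proof -
  have "of_nat n \<noteq> (0::ennreal)" using n by simp
  then show ?thesis unfolding nn_integral_Q[OF h]
    by (simp add: ennreal_times_divide mult.commute[of "of_nat n"] mult_divide_eq_ennreal)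
qed

lemma nn_integral_Q_snd:
  assumes g: "g \<in> borel_measurable W"
  shows "(\<integral>\<^sup>+p. g (snd p) \<partial>Q) = (\<integral>\<^sup>+p. g (snd p) \<partial>P)"
proof -
  have "of_nat n \<noteq> (0::ennreal)" using n by simp
  then show ?thesis using g
    by (simp add: nn_integral_Q mult.commute[of "of_nat n"] mult_divide_eq_ennreal)
qed

definition \<nu> :: "'w measure" where "\<nu> = distr P W snd"

lemma measurable_snd_P: "snd \<in> P \<rightarrow>\<^sub>M W"
  unfolding measurable_cong_sets[OF sets_P refl] by (rule measurable_snd)

lemma measurable_snd_Q: "snd \<in> Q \<rightarrow>\<^sub>M W"
  unfolding measurable_cong_sets[OF sets_Q refl] by (rule measurable_snd)

lemma prob_space_\<nu>: "prob_space \<nu>" and sets_\<nu>: "sets \<nu> = sets W"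
  unfolding \<nu>_def using prob_space.prob_space_distr[OF prob_space_P measurable_snd_P] by auto

lemma distr_Q_snd: "distr Q W snd = \<nu>"
proof (rule measure_eqI)
  fix B assume "B \<in> sets (distr Q W snd)"
  then have B: "B \<in> sets W" by simp
  have "emeasure (distr Q W snd) B = (\<integral>\<^sup>+p. indicator B (snd p) \<partial>Q)"
    by (rule emeasure_distr_eq_nn_integral[OF measurable_snd_Q B])
  also have "\<dots> = (\<integral>\<^sup>+p. indicator B (snd p) \<partial>P)"
    using B by (intro nn_integral_Q_snd) simp
  also have "\<dots> = emeasure \<nu> B"
    unfolding \<nu>_def by (rule emeasure_distr_eq_nn_integral[OF measurable_snd_P B, symmetric])
  finally show "emeasure (distr Q W snd) B = emeasure \<nu> B" .
qed (simp add: sets_\<nu>)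

abbreviation "R \<equiv> S \<Otimes>\<^sub>M \<nu>"
abbreviation "R' \<equiv> \<mu>' \<Otimes>\<^sub>M \<nu>"

lemma prob_space_R: "prob_space R" by (rule prob_space_pair[OF prob_space_S prob_space_\<nu>])
lemma prob_space_R': "prob_space R'" by (rule prob_space_pair[OF \<mu>'(1) prob_space_\<nu>])

lemma sets_R: "sets R = sets (SZ \<Otimes>\<^sub>M W)"
  by (rule sets_pair_measure_cong) (auto simp: sets_S sets_\<nu>)
lemma sets_R': "sets R' = sets (Z \<Otimes>\<^sub>M W)"
  by (rule sets_pair_measure_cong) (auto simp: \<mu>' sets_\<nu>)

lemma mutual_info_P: "mutual_info SZ W P = KL_div P R"
  unfolding mutual_info_def distr_P_fst \<nu>_def[symmetric] ..

lemma mutual_info_Q: "mutual_info Z W Q = KL_div Q R'"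
  unfolding mutual_info_def distr_Q_fst distr_Q_snd ..

lemma measurable_component_R:
  assumes "g \<in> borel_measurable R'" "i < n"
  shows "(\<lambda>p. g (fst p i, snd p)) \<in> borel_measurable R"
proof -
  have "g \<in> borel_measurable (Z \<Otimes>\<^sub>M W)"
    using assms(1) unfolding measurable_cong_sets[OF sets_R' refl] .
  from measurable_comp[OF measurable_component_pair[OF assms(2)] this] show ?thesis
    unfolding measurable_cong_sets[OF sets_R refl] by (simp add: comp_def)
qed

lemma nn_integral_R_component:
  assumes i: "i < n" and g: "g \<in> borel_measurable R'"
  shows "(\<integral>\<^sup>+p. g (fst p i, snd p) \<partial>R) = (\<integral>\<^sup>+p. g p \<partial>R')"
proof -
  interpret S: prob_space S by (rule prob_space_S)
  interpret \<nu>: prob_space \<nu> by (rule prob_space_\<nu>)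
  interpret \<mu>': prob_space \<mu>' by (rule \<mu>'(1))
  interpret SR: pair_sigma_finite S \<nu> ..
  interpret R': pair_sigma_finite \<mu>' \<nu> ..
  have "(\<integral>\<^sup>+p. g (fst p i, snd p) \<partial>R) = (\<integral>\<^sup>+w. \<integral>\<^sup>+s. g (s i, w) \<partial>S \<partial>\<nu>)"
    using SR.nn_integral_snd[OF measurable_component_R[OF g i]] by simp
  also have "\<dots> = (\<integral>\<^sup>+w. \<integral>\<^sup>+z. g (z, w) \<partial>\<mu>' \<partial>\<nu>)"
  proof (rule nn_integral_cong)
    fix w assume "w \<in> space \<nu>"
    then have "(\<lambda>z. g (z, w)) \<in> borel_measurable \<mu>'"
      using measurable_comp[OF measurable_Pair2'[of w \<nu> \<mu>'] g] by (simp add: comp_def)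
    then show "(\<integral>\<^sup>+s. g (s i, w) \<partial>S) = (\<integral>\<^sup>+z. g (z, w) \<partial>\<mu>')"
      using i by (intro nn_integral_PiM_component[OF \<mu>'(1) finite_lessThan]) simp_all
  qed
  also have "\<dots> = (\<integral>\<^sup>+p. g p \<partial>R')"
    using R'.nn_integral_snd[OF g] by simp
  finally show ?thesis .
qed

lemma absolutely_continuous_Q:
  assumes ac: "absolutely_continuous R P"
  shows "absolutely_continuous R' Q"
  unfolding absolutely_continuous_def
proof
  fix N assume "N \<in> null_sets R'"
  then have N: "N \<in> sets R'" "emeasure R' N = 0" by auto
  have component_null: "(\<integral>\<^sup>+p. indicator N (fst p i, snd p) \<partial>P) = 0" if i: "i < n" for i
  proof -
    have h: "(\<lambda>p. indicator N (fst p i, snd p) :: ennreal) \<in> borel_measurable R"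
      using N(1) i by (intro measurable_component_R) simp
    have "(\<integral>\<^sup>+p. indicator N (fst p i, snd p) \<partial>R) = 0"
      using N by (simp add: nn_integral_R_component[OF i])
    then have "AE p in R. indicator N (fst p i, snd p) = (0::ennreal)"
      using nn_integral_0_iff_AE[OF h] by simp
    then have "AE p in P. indicator N (fst p i, snd p) = (0::ennreal)"
      using sets_P sets_R by (intro absolutely_continuous_AE[OF _ ac]) simp
    then show ?thesis by (simp add: nn_integral_cong_AE)
  qed
  have "emeasure Q N = (\<integral>\<^sup>+p. indicator N p \<partial>Q)" using N sets_Q sets_R' by simp
  also have "\<dots> = 0" using N(1) sets_R' component_null by (simp add: nn_integral_Q)
  finally show "N \<in> null_sets Q" using N sets_Q sets_R' by auto
qed

definition dP :: "(nat \<Rightarrow> 'z) \<times> 'w \<Rightarrow> real" where "dP p = enn2real (RN_deriv R P p)"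
definition dQ :: "'z \<times> 'w \<Rightarrow> real" where "dQ p = enn2real (RN_deriv R' Q p)"

lemma dP_nonneg: "0 \<le> dP p" and dQ_nonneg: "0 \<le> dQ q"
  by (simp_all add: dP_def dQ_def)

lemma measurable_dP [measurable]: "dP \<in> borel_measurable R"
  and measurable_dQ [measurable]: "dQ \<in> borel_measurable R'"
  unfolding dP_def[abs_def] dQ_def[abs_def] by measurable

lemma nn_integral_P_density:
  "absolutely_continuous R P \<Longrightarrow> h \<in> borel_measurable R \<Longrightarrow>
    (\<integral>\<^sup>+p. h p \<partial>P) = (\<integral>\<^sup>+p. ennreal (dP p) * h p \<partial>R)"
  unfolding dP_def using prob_space_R prob_space_P sets_P sets_R
  by (intro nn_integral_real_RN_deriv) (auto intro: prob_space_imp_sigma_finite)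

lemma nn_integral_Q_density:
  "absolutely_continuous R' Q \<Longrightarrow> h \<in> borel_measurable R' \<Longrightarrow>
    (\<integral>\<^sup>+p. h p \<partial>Q) = (\<integral>\<^sup>+p. ennreal (dQ p) * h p \<partial>R')"
  unfolding dQ_def using prob_space_R' prob_space_Q sets_Q sets_R'
  by (intro nn_integral_real_RN_deriv) (auto intro: prob_space_imp_sigma_finite)

text \<open>This holds because the hypothesis marginal of \<open>Q\<close> is \<open>\<nu>\<close>, the second factor of \<open>R'\<close>.\<close>
lemma AE_nn_integral_dQ_eq_1:
  assumes ac: "absolutely_continuous R' Q"
  shows "AE w in \<nu>. (\<integral>\<^sup>+z. ennreal (dQ (z, w)) \<partial>\<mu>') = 1"
proof -
  interpret \<nu>: prob_space \<nu> by (rule prob_space_\<nu>)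
  interpret \<mu>': prob_space \<mu>' by (rule \<mu>'(1))
  interpret R': pair_sigma_finite \<mu>' \<nu> ..
  define a where "a w = (\<integral>\<^sup>+z. ennreal (dQ (z, w)) \<partial>\<mu>')" for w
  have "(\<lambda>(w, z). ennreal (dQ (z, w))) \<in> borel_measurable (\<nu> \<Otimes>\<^sub>M \<mu>')"
    using measurable_comp[OF measurable_pair_swap' measurable_dQ] by (simp add: comp_def case_prod_beta')
  then have a: "a \<in> borel_measurable \<nu>"
    unfolding a_def using \<mu>'.borel_measurable_nn_integral by simp
  have "density \<nu> a = density \<nu> (\<lambda>_. 1)"
  proof (rule measure_eqI)
    fix B assume "B \<in> sets (density \<nu> a)"
    then have B: "B \<in> sets \<nu>" "B \<in> sets W" by (simp_all add: sets_\<nu>)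
    have ind: "(\<lambda>p. indicator B (snd p) :: ennreal) \<in> borel_measurable R'" using B(1) by measurable
    have "emeasure (density \<nu> a) B = (\<integral>\<^sup>+w. \<integral>\<^sup>+z. ennreal (dQ (z, w)) * indicator B w \<partial>\<mu>' \<partial>\<nu>)"
      unfolding emeasure_density[OF a B(1)] a_def
      by (intro nn_integral_cong nn_integral_multc[symmetric]) measurable
    also have "\<dots> = (\<integral>\<^sup>+p. ennreal (dQ p) * indicator B (snd p) \<partial>R')"
      using R'.nn_integral_snd[of "\<lambda>p. ennreal (dQ p) * indicator B (snd p)"] ind by simp
    also have "\<dots> = (\<integral>\<^sup>+p. indicator B (snd p) \<partial>Q)"
      by (rule nn_integral_Q_density[OF ac ind, symmetric])
    also have "\<dots> = emeasure \<nu> B"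
      using emeasure_distr_eq_nn_integral[OF measurable_snd_Q B(2)] distr_Q_snd by simp
    finally show "emeasure (density \<nu> a) B = emeasure (density \<nu> (\<lambda>_. 1)) B"
      by (simp add: density_1)
  qed simp
  then have "AE w in \<nu>. a w = 1" using \<nu>.density_unique[OF a measurable_const] by simp
  then show ?thesis by (simp add: a_def)
qed

lemma nn_integral_prod_dQ:
  assumes ac: "absolutely_continuous R' Q"
  shows "(\<integral>\<^sup>+p. ennreal (\<Prod>i<n. dQ (fst p i, snd p)) \<partial>R) = 1"
proof -
  interpret \<nu>: prob_space \<nu> by (rule prob_space_\<nu>)
  interpret S: prob_space S by (rule prob_space_S)
  interpret SR: pair_sigma_finite S \<nu> ..
  interpret \<mu>': product_prob_space "\<lambda>_. \<mu>'" by (rule product_prob_spaceI) (rule \<mu>'(1))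
  have "(\<lambda>p. ennreal (\<Prod>i<n. dQ (fst p i, snd p))) \<in> borel_measurable R"
    using measurable_component_R[OF measurable_dQ]
    by (intro measurable_compose[OF _ measurable_ennreal] borel_measurable_prod) auto
  from SR.nn_integral_snd[OF this]
  have "(\<integral>\<^sup>+p. ennreal (\<Prod>i<n. dQ (fst p i, snd p)) \<partial>R)
      = (\<integral>\<^sup>+w. \<integral>\<^sup>+s. ennreal (\<Prod>i<n. dQ (s i, w)) \<partial>S \<partial>\<nu>)" by simp
  also have "\<dots> = (\<integral>\<^sup>+w. \<integral>\<^sup>+s. (\<Prod>i<n. ennreal (dQ (s i, w))) \<partial>S \<partial>\<nu>)"
    by (simp add: prod_ennreal dQ_nonneg)
  also have "\<dots> = (\<integral>\<^sup>+w. 1 \<partial>\<nu>)"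
  proof (rule nn_integral_cong_AE)
    show "AE w in \<nu>. (\<integral>\<^sup>+s. (\<Prod>i<n. ennreal (dQ (s i, w))) \<partial>S) = 1"
      using AE_nn_integral_dQ_eq_1[OF ac] AE_space
    proof eventually_elim
      case (elim w)
      have "(\<lambda>z. ennreal (dQ (z, w))) \<in> borel_measurable \<mu>'"
        using measurable_comp[OF measurable_Pair2'[of w \<nu> \<mu>'] measurable_dQ] elim
        by (simp add: comp_def)
      then have "(\<integral>\<^sup>+s. (\<Prod>i<n. ennreal (dQ (s i, w))) \<partial>S) = (\<Prod>i<n. \<integral>\<^sup>+z. ennreal (dQ (z, w)) \<partial>\<mu>')"
        by (intro \<mu>'.product_nn_integral_prod) auto
      then show ?case using elim by simp
    qed
  qed
  also have "\<dots> = 1" by (simp add: \<nu>.emeasure_space_1)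
  finally show ?thesis .
qed

lemma AE_dP_zero_or_dQ_pos:
  assumes ac: "absolutely_continuous R P" and i: "i < n"
  shows "AE p in R. dP p = 0 \<or> 0 < dQ (fst p i, snd p)"
proof -
  define h where "h p = (if dQ p = 0 then 1 else 0 :: ennreal)" for p
  have h: "h \<in> borel_measurable R'" unfolding h_def by measurable
  have hi: "(\<lambda>p. h (fst p i, snd p)) \<in> borel_measurable R" by (rule measurable_component_R[OF h i])
  have "(\<integral>\<^sup>+p. h p \<partial>Q) = (\<integral>\<^sup>+p. ennreal (dQ p) * h p \<partial>R')"
    by (rule nn_integral_Q_density[OF absolutely_continuous_Q[OF ac] h])
  also have "\<dots> = (\<integral>\<^sup>+p. 0 \<partial>R')" by (rule nn_integral_cong) (simp add: h_def)
  finally have "of_nat n * (\<integral>\<^sup>+p. h p \<partial>Q) = 0" by simp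
  then have "(\<Sum>j<n. \<integral>\<^sup>+p. h (fst p j, snd p) \<partial>P) = 0"
    by (simp only: of_nat_mult_nn_integral_Q[OF h[unfolded measurable_cong_sets[OF sets_R' refl]]])
  then have "(\<integral>\<^sup>+p. h (fst p i, snd p) \<partial>P) = 0" using i by simp
  then have "(\<integral>\<^sup>+p. ennreal (dP p) * h (fst p i, snd p) \<partial>R) = 0"
    by (simp only: nn_integral_P_density[OF ac hi])
  then have "AE p in R. ennreal (dP p) * h (fst p i, snd p) = 0"
    using hi by (subst (asm) nn_integral_0_iff_AE) auto
  then show ?thesis
  proof eventually_elim
    case (elim p)
    then show ?case
      using dP_nonneg[of p] dQ_nonneg[of "(fst p i, snd p)"] by (auto simp: h_def split: if_splits)
  qed
qed

lemma of_nat_mult_nn_integral_dQ_ln: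
  assumes ac: "absolutely_continuous R P"
  shows "of_nat n * (\<integral>\<^sup>+q. ennreal (dQ q * (c * ln (dQ q))) \<partial>R')
    = (\<Sum>i<n. \<integral>\<^sup>+p. ennreal (dP p * (c * ln (dQ (fst p i, snd p)))) \<partial>R)"
proof -
  have h: "(\<lambda>q. ennreal (c * ln (dQ q))) \<in> borel_measurable R'" by measurable
  have "of_nat n * (\<integral>\<^sup>+q. ennreal (dQ q * (c * ln (dQ q))) \<partial>R')
      = of_nat n * (\<integral>\<^sup>+q. ennreal (c * ln (dQ q)) \<partial>Q)"
    by (simp add: nn_integral_Q_density[OF absolutely_continuous_Q[OF ac] h] ennreal_mult' dQ_nonneg)
  also have "\<dots> = (\<Sum>i<n. \<integral>\<^sup>+p. ennreal (c * ln (dQ (fst p i, snd p))) \<partial>P)"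
    by (rule of_nat_mult_nn_integral_Q[OF h[unfolded measurable_cong_sets[OF sets_R' refl]]])
  also have "\<dots> = (\<Sum>i<n. \<integral>\<^sup>+p. ennreal (dP p * (c * ln (dQ (fst p i, snd p)))) \<partial>R)"
  proof (rule sum.cong[OF refl])
    fix i assume "i \<in> {..<n}"
    then have hi: "(\<lambda>p. ennreal (c * ln (dQ (fst p i, snd p)))) \<in> borel_measurable R"
      by (intro measurable_component_R[OF h]) simp
    have "(\<integral>\<^sup>+p. ennreal (c * ln (dQ (fst p i, snd p))) \<partial>P)
        = (\<integral>\<^sup>+p. ennreal (dP p) * ennreal (c * ln (dQ (fst p i, snd p))) \<partial>R)"
      by (rule nn_integral_P_density[OF ac hi])
    also have "\<dots> = (\<integral>\<^sup>+p. ennreal (dP p * (c * ln (dQ (fst p i, snd p)))) \<partial>R)"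
      by (simp add: ennreal_mult' dP_nonneg)
    finally show "(\<integral>\<^sup>+p. ennreal (c * ln (dQ (fst p i, snd p))) \<partial>P)
        = (\<integral>\<^sup>+p. ennreal (dP p * (c * ln (dQ (fst p i, snd p)))) \<partial>R)" .
  qed
  finally show ?thesis .
qed

lemma KL_div_Q_le: "KL_div Q R' \<le> KL_div P R / ereal (real n)"
proof (cases "absolutely_continuous R P")
  case False
  then show ?thesis using n sets_P sets_R by (simp add: KL_div_def)
next
  case ac: True
  define g where "g i p = dQ (fst p i, snd p)" for i :: nat and p :: "(nat \<Rightarrow> 'z) \<times> 'w"
  define Xp where "Xp = (\<integral>\<^sup>+p. ennreal (dP p * ln (dP p)) \<partial>R)"
  define Xm where "Xm = (\<integral>\<^sup>+p. ennreal (- (dP p * ln (dP p))) \<partial>R)"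
  define Yp where "Yp = (\<integral>\<^sup>+q. ennreal (dQ q * ln (dQ q)) \<partial>R')"
  define Ym where "Ym = (\<integral>\<^sup>+q. ennreal (- (dQ q * ln (dQ q))) \<partial>R')"
  have KL_P: "KL_div P R = enn2ereal Xp - enn2ereal Xm"
    using sets_P sets_R ac by (simp add: KL_div_def Xp_def Xm_def dP_def)
  have KL_Q: "KL_div Q R' = enn2ereal Yp - enn2ereal Ym"
    using sets_Q sets_R' absolutely_continuous_Q[OF ac]
    by (simp add: KL_div_def Yp_def Ym_def dQ_def)
  have Xm: "Xm \<noteq> \<top>" unfolding Xm_def
    using prob_space.finite_measure[OF prob_space_R] by (intro nn_integral_neg_mult_ln_neq_top dP_nonneg)
  have Ym: "Ym \<noteq> \<top>" unfolding Ym_def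
    using prob_space.finite_measure[OF prob_space_R'] by (intro nn_integral_neg_mult_ln_neq_top dQ_nonneg)
  have "(\<integral>\<^sup>+p. ennreal (dP p) \<partial>R) = (\<integral>\<^sup>+p. 1 \<partial>P)"
    using nn_integral_P_density[OF ac, of "\<lambda>_. 1"] by simp
  then have int_dP: "(\<integral>\<^sup>+p. ennreal (dP p) \<partial>R) = 1"
    using prob_space.emeasure_space_1[OF prob_space_P] by simp
  have "(\<Sum>i<n. \<integral>\<^sup>+p. ennreal (dP p * ln (g i p)) \<partial>R) + Xm
      \<le> Xp + (\<Sum>i<n. \<integral>\<^sup>+p. ennreal (- (dP p * ln (g i p))) \<partial>R)"
    unfolding Xp_def Xm_def
  proof (rule nn_integral_gibbs)
    show "\<And>i. i < n \<Longrightarrow> g i \<in> borel_measurable R"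
      unfolding g_def by (rule measurable_component_R[OF measurable_dQ])
    show "(\<integral>\<^sup>+p. ennreal (\<Prod>i<n. g i p) \<partial>R) = 1"
      unfolding g_def by (rule nn_integral_prod_dQ[OF absolutely_continuous_Q[OF ac]])
    have "AE p in R. \<forall>i\<in>{..<n}. dP p = 0 \<or> 0 < g i p"
      unfolding g_def by (rule AE_finite_allI) (use AE_dP_zero_or_dQ_pos[OF ac] in auto)
    then show "AE p in R. dP p = 0 \<or> (\<forall>i<n. 0 < g i p)" by (rule AE_mp) auto
  qed (auto simp: g_def dP_nonneg dQ_nonneg int_dP)
  moreover have "of_nat n * Yp = (\<Sum>i<n. \<integral>\<^sup>+p. ennreal (dP p * ln (g i p)) \<partial>R)"
    and "of_nat n * Ym = (\<Sum>i<n. \<integral>\<^sup>+p. ennreal (- (dP p * ln (g i p))) \<partial>R)"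
    using of_nat_mult_nn_integral_dQ_ln[OF ac, of 1] of_nat_mult_nn_integral_dQ_ln[OF ac, of "- 1"]
    by (simp_all add: Yp_def Ym_def g_def)
  ultimately have "of_nat n * Yp + Xm \<le> Xp + of_nat n * Ym" by simp
  then show ?thesis unfolding KL_P KL_Q by (rule enn2ereal_diff_le_divide[OF n Xm Ym])
qed

lemma mutual_info_Q_le: "mutual_info Z W Q \<le> mutual_info SZ W P / ereal (real n)"
  unfolding mutual_info_Q mutual_info_P by (rule KL_div_Q_le)

lemma nn_integral_Q_loss:
  assumes l: "(\<lambda>(w, z). l w z) \<in> borel_measurable (W \<Otimes>\<^sub>M Z)"
    and l_nonneg: "\<And>w z. w \<in> space W \<Longrightarrow> z \<in> space Z \<Longrightarrow> 0 \<le> l w z"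
  shows "(\<integral>\<^sup>+q. ennreal (l (snd q) (fst q)) \<partial>Q) = (\<integral>\<^sup>+p. ennreal (emp_risk l n (fst p) (snd p)) \<partial>P)"
proof -
  have l': "(\<lambda>q. ennreal (l (snd q) (fst q))) \<in> borel_measurable (Z \<Otimes>\<^sub>M W)"
    using measurable_comp[OF measurable_pair_swap' l] by (simp add: comp_def case_prod_beta')
  have li: "(\<lambda>p. ennreal (l (snd p) (fst p i))) \<in> borel_measurable P" if "i < n" for i
    unfolding measurable_cong_sets[OF sets_P refl]
    using measurable_comp[OF measurable_component_pair[OF that] l'] by (simp add: comp_def)
  have "(\<integral>\<^sup>+q. ennreal (l (snd q) (fst q)) \<partial>Q) = (\<Sum>i<n. \<integral>\<^sup>+p. ennreal (l (snd p) (fst p i)) \<partial>P) / of_nat n"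
    using nn_integral_Q[OF l'] by simp
  also have "\<dots> = (\<integral>\<^sup>+p. (\<Sum>i<n. ennreal (l (snd p) (fst p i))) / of_nat n \<partial>P)"
  proof -
    have "(\<integral>\<^sup>+p. (\<Sum>i<n. ennreal (l (snd p) (fst p i))) \<partial>P) = (\<Sum>i<n. \<integral>\<^sup>+p. ennreal (l (snd p) (fst p i)) \<partial>P)"
      by (rule nn_integral_sum) (use li in auto)
    then show ?thesis using li by (simp add: nn_integral_divide borel_measurable_sum)
  qed
  also have "\<dots> = (\<integral>\<^sup>+p. ennreal (emp_risk l n (fst p) (snd p)) \<partial>P)"
  proof (rule nn_integral_cong)
    fix p assume "p \<in> space P"
    then have "snd p \<in> space W" "\<And>i. i < n \<Longrightarrow> fst p i \<in> space Z"
      using space_P by (auto simp: space_pair_measure space_PiM)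
    then have nonneg: "\<And>i. i < n \<Longrightarrow> 0 \<le> l (snd p) (fst p i)" using l_nonneg by blast
    then have "(\<Sum>i<n. ennreal (l (snd p) (fst p i))) = ennreal (\<Sum>i<n. l (snd p) (fst p i))"
      by (intro sum_ennreal) auto
    then show "(\<Sum>i<n. ennreal (l (snd p) (fst p i))) / of_nat n = ennreal (emp_risk l n (fst p) (snd p))"
      using n divide_ennreal[OF sum_nonneg[of "{..<n}", OF nonneg]]
      by (simp add: emp_risk_def ennreal_of_nat_eq_real_of_nat)
  qed
  finally show ?thesis .
qed

end

theorem theorem2:
  fixes Z :: "'z measure" and W :: "'w measure"
    and l :: "'w \<Rightarrow> 'z \<Rightarrow> real"
    and \<mu> \<mu>' :: "'z measure" and n :: nat
    and A :: "(nat \<Rightarrow> 'z) \<Rightarrow> 'w measure"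
  assumes l_meas: "(\<lambda>(w, z). l w z) \<in> borel_measurable (W \<Otimes>\<^sub>M Z)"
    and l_nonneg: "\<And>w z. w \<in> space W \<Longrightarrow> z \<in> space Z \<Longrightarrow> 0 \<le> l w z"
    and \<mu>: "prob_space \<mu>" "sets \<mu> = sets Z"
    and \<mu>': "prob_space \<mu>'" "sets \<mu>' = sets Z"
    and n: "1 \<le> n"
    and A: "A \<in> measurable (PiM {..<n} (\<lambda>_. Z)) (prob_algebra W)"
    and gen_def: "gen_err_defined Z W l \<mu> \<mu>' n A"
  shows "gen_err Z W l \<mu> \<mu>' n A
           \<le> D2 Z W l \<mu> \<mu>'
               (mutual_info (PiM {..<n} (\<lambda>_. Z)) W
                  (joint_law (PiM {..<n} (\<lambda>_. Z)) W (PiM {..<n} (\<lambda>_. \<mu>')) A) / ereal (real n))"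
proof -
  interpret single_sample_algorithm Z W \<mu>' n A
    using \<mu>' n A by (simp add: single_sample_algorithm_def)
  have P: "joint_law SZ W S A = P" by (simp add: P_def)
  have pop_risk: "(\<integral>\<^sup>+q. pop_risk l \<mu> (snd q) \<partial>Q) = (\<integral>\<^sup>+p. pop_risk l \<mu> (snd p) \<partial>P)"
    using l_meas \<mu> by (intro nn_integral_Q_snd measurable_pop_risk prob_space_imp_sigma_finite)
  note loss = nn_integral_Q_loss[OF l_meas l_nonneg]
  have defined: "\<not> ((\<integral>\<^sup>+q. pop_risk l \<mu> (snd q) \<partial>Q) = \<infinity> \<and> (\<integral>\<^sup>+q. ennreal (l (snd q) (fst q)) \<partial>Q) = \<infinity>)"
    using gen_def by (simp add: gen_err_defined_def Let_def P pop_risk loss)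
  have "gen_err Z W l \<mu> \<mu>' n A
      = enn2ereal (\<integral>\<^sup>+q. pop_risk l \<mu> (snd q) \<partial>Q) - enn2ereal (\<integral>\<^sup>+q. ennreal (l (snd q) (fst q)) \<partial>Q)"
    by (simp add: gen_err_def Let_def P pop_risk loss)
  also have "\<dots> \<le> D2 Z W l \<mu> \<mu>' (mutual_info SZ W P / ereal (real n))"
    unfolding D2_def using measurable_K mutual_info_Q_le defined unfolding Q_def
    by (intro Sup_upper) blast
  finally show ?thesis unfolding P .
qed

end
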